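(* Let $C,A^1,\dots,A^m\in\mathbb{S}^n$, $b\in\mathbb{R}^m$, with $\mathbf{P}$ and $\mathbf{D}$ feasible and $\mathbf{D}$ of singularity degree one, and let $0\le r<n$ be such that, writing $L(y)=C-\sum_iA^iy_i$ in blocks $L_{11}(y)\in\mathbb{S}^r$, $L_{12}(y)\in\mathbb{R}^{r\times(n-r)}$, $L_{22}(y)\in\mathbb{S}^{n-r}$: (a) for every $y$, $L(y)\succeq0$ iff $L_{12}(y)=0$, $L_{22}(y)=0$, $L_{11}(y)\succeq0$; (b) some $y$ has $L_{12}(y)=0$, $L_{22}(y)=0$, $L_{11}(y)\succ0$; (c) there is $X=\mathrm{diag}(0,X_{22})$ with $X_{22}\succ0$, $C\bullet X=0$, $A^i\bullet X=0$ for all $i$. Let $M>0$ be a constant such that for all $t\ge0$ and $y\in\mathbb{R}^m$, $L_{22}(y)+tI_{22}\succeq0$ implies $tMI_{22}\succeq L_{22}(y)+tI_{22}$. For $\alpha>0,t>0$ let $u_1(\alpha,t)$ be the optimal value (supremum) of $$\mathbf{RD1}(\alpha,t):\ \max_y\ b^Ty-\frac{\|L_{12}(y)\|_F^2}{M\alpha}\ \text{ s.t. } L(y)+t\alpha I\succeq0 .$$ Then for all $t>0$ and $\alpha>0$, $$v(0,t)\le v(t\alpha,t)\le u_1(\alpha,t)+t^2\alpha n+tc,\qquad c:=C\bullet I .$$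
   Context: $\mathbf{P}$: $\min_X C\bullet X$ s.t. $A^i\bullet X=b_i$, $X\succeq0$; $\mathbf{D}$: $\max_y b^Ty$ s.t. $C-\sum_iA^iy_i\succeq0$. $\mathbf{D}$ has singularity degree one if it is feasible and there exists a nonzero $X\succeq0$ with $C\bullet X=0$, $A^i\bullet X=0$ for all $i$, such that some $y$ has $C-\sum_iA^iy_i$ in the relative interior of $\{Z\succeq0: Z\bullet X=0\}$. For $\varepsilon,\eta\ge0$: $\mathbf{D}(\varepsilon,\eta)$: $\max_y \sum_i(b_i+\eta A^i\bullet I)y_i$ s.t. $C-\sum_iA^iy_i+\varepsilon I\succeq0$, and $\mathbf{P}(\varepsilon,\eta)$: $\min_X (C+\varepsilon I)\bullet X$ s.t. $A^i\bullet X=b_i+\eta A^i\bullet I$, $X\succeq0$; for $(\varepsilon,\eta)\ne(0,0)$, $v(\varepsilon,\eta)$ is their common optimal value. $\|\cdot\|_F$ is the Frobenius norm; $I_{22}$ is the $(n-r)\times(n-r)$ identity. *)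

theory Defs
  imports "HOL-Analysis.Analysis"
begin

text \<open>Symmetric n x n real matrices are modelled as real^'n^'n with 'n a finite
linearly ordered index type (so n = CARD('n), indices ordered as 1..n).\<close>

definition symm :: "real^('n::finite)^('n::finite) \<Rightarrow> bool" where
  "symm A \<longleftrightarrow> transpose A = A"

definition frob :: "real^('n::finite)^('n::finite) \<Rightarrow> real^('n::finite)^('n::finite) \<Rightarrow> real" where
  "frob A B = (\<Sum>i\<in>UNIV. \<Sum>j\<in>UNIV. A$i$j * B$i$j)"

definition psd :: "real^('n::finite)^('n::finite) \<Rightarrow> bool" where
  "psd A \<longleftrightarrow> symm A \<and> (\<forall>x. x \<bullet> (A *v x) \<ge> 0)"

definition psd_on :: "'n set \<Rightarrow> real^('n::finite)^('n::finite) \<Rightarrow> bool" where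
  "psd_on S A \<longleftrightarrow> (\<forall>x::'n \<Rightarrow> real. (\<Sum>i\<in>S. \<Sum>j\<in>S. x i * A$i$j * x j) \<ge> 0)"

definition pd_on :: "'n set \<Rightarrow> real^('n::finite)^('n::finite) \<Rightarrow> bool" where
  "pd_on S A \<longleftrightarrow> (\<forall>x::'n \<Rightarrow> real. (\<exists>i\<in>S. x i \<noteq> 0) \<longrightarrow>
      (\<Sum>i\<in>S. \<Sum>j\<in>S. x i * A$i$j * x j) > 0)"

text \<open>First block: the r smallest indices.\<close>
definition blk1 :: "nat \<Rightarrow> 'n::{finite,linorder} set" where
  "blk1 r = {i. card {j. j < i} < r}"

definition Lmap :: "real^('n::finite)^('n::finite) \<Rightarrow> (nat \<Rightarrow> real^('n::finite)^('n::finite)) \<Rightarrow> nat \<Rightarrow> (nat \<Rightarrow> real) \<Rightarrow> real^('n::finite)^('n::finite)" where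
  "Lmap C A m y = C - (\<Sum>i<m. y i *\<^sub>R A i)"

definition bty :: "(nat \<Rightarrow> real) \<Rightarrow> nat \<Rightarrow> (nat \<Rightarrow> real) \<Rightarrow> real" where
  "bty b m y = (\<Sum>i<m. b i * y i)"

definition P_feasible :: "real^('n::finite)^('n::finite) \<Rightarrow> (nat \<Rightarrow> real^('n::finite)^('n::finite)) \<Rightarrow> (nat \<Rightarrow> real) \<Rightarrow> nat \<Rightarrow> bool" where
  "P_feasible C A b m \<longleftrightarrow> (\<exists>X. psd X \<and> (\<forall>i<m. frob (A i) X = b i))"

definition D_feasible :: "real^('n::finite)^('n::finite) \<Rightarrow> (nat \<Rightarrow> real^('n::finite)^('n::finite)) \<Rightarrow> nat \<Rightarrow> bool" where
  "D_feasible C A m \<longleftrightarrow> (\<exists>y. psd (Lmap C A m y))"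

definition sing_deg_one :: "real^('n::finite)^('n::finite) \<Rightarrow> (nat \<Rightarrow> real^('n::finite)^('n::finite)) \<Rightarrow> nat \<Rightarrow> bool" where
  "sing_deg_one C A m \<longleftrightarrow> D_feasible C A m \<and>
     (\<exists>X. X \<noteq> 0 \<and> psd X \<and> frob C X = 0 \<and> (\<forall>i<m. frob (A i) X = 0) \<and>
        (\<exists>y. Lmap C A m y \<in> rel_interior {Z. psd Z \<and> frob Z X = 0}))"

definition vval :: "real^('n::finite)^('n::finite) \<Rightarrow> (nat \<Rightarrow> real^('n::finite)^('n::finite)) \<Rightarrow> (nat \<Rightarrow> real) \<Rightarrow> nat \<Rightarrow> real \<Rightarrow> real \<Rightarrow> ereal" where
  "vval C A b m eps eta = Sup {ereal (\<Sum>i<m. (b i + eta * frob (A i) (mat 1)) * y i) | y.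
       psd (Lmap C A m y + eps *\<^sub>R mat 1)}"

definition sqnorm12 :: "nat \<Rightarrow> real^('n::{finite,linorder})^('n::{finite,linorder}) \<Rightarrow> real" where
  "sqnorm12 r Z = (\<Sum>i\<in>blk1 r. \<Sum>j\<in>- blk1 r. (Z$i$j)\<^sup>2)"

definition u1 :: "real^('n::{finite,linorder})^('n::{finite,linorder}) \<Rightarrow> (nat \<Rightarrow> real^('n::{finite,linorder})^('n::{finite,linorder})) \<Rightarrow> (nat \<Rightarrow> real) \<Rightarrow> nat \<Rightarrow> nat \<Rightarrow> real \<Rightarrow> real \<Rightarrow> real \<Rightarrow> ereal" where
  "u1 C A b m r M \<alpha> t = Sup {ereal (bty b m y - sqnorm12 r (Lmap C A m y) / (M * \<alpha>)) | y.
       psd (Lmap C A m y + (t * \<alpha>) *\<^sub>R mat 1)}"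

end

theory Submission
  imports Defs
begin

(* If y is feasible for D(t alpha, t), then Z = L(y) + t alpha I is positive semidefinite and,
   by the choice of M, its lower right block is bounded above by l I with l = t alpha M.
   A Schur-complement type estimate then bounds every row i of the first block:
   sum_j Z_ij^2 <= l Z_ii over the second block, hence ||L_12||_F^2 <= l tr Z.
   As tr Z = c - sum_i y_i (A^i . I) + t alpha n, the objective of D(t alpha, t) at y exceeds
   the objective of RD1(alpha, t) at y by at most t c + t^2 alpha n. *)

lemma inner_matrix_vector_eq_quadratic_sum:
  fixes Z :: "real^'n::finite^'n"
  shows "x \<bullet> (Z *v x) = (\<Sum>i\<in>UNIV. \<Sum>j\<in>UNIV. x$i * Z$i$j * x$j)"
  by (simp add: inner_vec_def matrix_vector_mult_def sum_distrib_left mult_ac)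

lemma psd_quadratic_sum_nonneg:
  assumes "psd Z"
  shows "0 \<le> (\<Sum>i\<in>UNIV. \<Sum>j\<in>UNIV. f i * Z$i$j * f j)"
proof -
  have "0 \<le> (\<chi> i. f i) \<bullet> (Z *v (\<chi> i. f i))"
    using assms by (simp add: psd_def)
  then show ?thesis
    by (simp add: inner_matrix_vector_eq_quadratic_sum)
qed

lemma psd_entry_sym:
  assumes "psd Z"
  shows "Z$i$j = Z$j$i"
proof -
  have "transpose Z $ j $ i = Z $ j $ i"
    using assms by (simp add: psd_def symm_def)
  then show ?thesis by (simp add: transpose_def)
qed

lemma psd_imp_psd_on:
  fixes Z :: "real^'n::finite^'n"
  assumes "psd Z"
  shows "psd_on S Z"
  unfolding psd_on_def
proof
  fix x :: "'n \<Rightarrow> real"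
  define g where "g k = (if k \<in> S then x k else 0)" for k
  have "0 \<le> (\<Sum>i\<in>UNIV. \<Sum>j\<in>UNIV. g i * Z$i$j * g j)"
    using psd_quadratic_sum_nonneg[OF assms] .
  also have "\<dots> = (\<Sum>i\<in>UNIV. if i \<in> S then (\<Sum>j\<in>UNIV. if j \<in> S then x i * Z$i$j * x j else 0) else 0)"
    by (rule sum.cong) (auto simp: g_def intro!: sum.cong)
  also have "\<dots> = (\<Sum>i\<in>S. \<Sum>j\<in>S. x i * Z$i$j * x j)"
    by (simp add: sum.inter_restrict[symmetric] Int_commute)
  finally show "0 \<le> (\<Sum>i\<in>S. \<Sum>j\<in>S. x i * Z$i$j * x j)" .
qed

lemma psd_diag_nonneg:
  assumes "psd Z"
  shows "0 \<le> Z$i$i"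
  using spec[OF psd_imp_psd_on[OF assms, of "{i}", unfolded psd_on_def], of "\<lambda>_. 1"] by simp

lemma psd_add_scaled_id:
  assumes "psd Z" "c \<ge> 0"
  shows "psd (Z + c *\<^sub>R mat 1)"
  unfolding psd_def
proof
  show "symm (Z + c *\<^sub>R mat 1)"
    using psd_entry_sym[OF assms(1)] by (simp add: symm_def transpose_def vec_eq_iff mat_def)
  show "\<forall>x. 0 \<le> x \<bullet> ((Z + c *\<^sub>R mat 1) *v x)"
    using assms by (simp add: psd_def matrix_vector_mult_add_rdistrib
        scaleR_matrix_vector_assoc[symmetric] inner_add_right)
qed

lemma psd_on_scaled_id_minus_imp_le:
  assumes "psd_on S (l *\<^sub>R mat 1 - Z)"
  shows "(\<Sum>j\<in>S. \<Sum>k\<in>S. x j * Z$j$k * x k) \<le> l * (\<Sum>j\<in>S. (x j)\<^sup>2)"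
proof -
  have "0 \<le> (\<Sum>j\<in>S. \<Sum>k\<in>S. x j * (l *\<^sub>R mat 1 - Z)$j$k * x k)"
    using assms unfolding psd_on_def by blast
  also have "\<dots> = (\<Sum>j\<in>S. \<Sum>k\<in>S. (if j = k then l * x j * x k else 0) - x j * Z$j$k * x k)"
    by (intro sum.cong refl) (auto simp: mat_def algebra_simps)
  also have "\<dots> = l * (\<Sum>j\<in>S. (x j)\<^sup>2) - (\<Sum>j\<in>S. \<Sum>k\<in>S. x j * Z$j$k * x k)"
    by (simp add: sum_subtractf sum_distrib_left power2_eq_square mult_ac)
  finally show ?thesis by simp
qed

lemma psd_quadratic_sum_insert:
  fixes Z :: "real^'n::finite^'n"
  assumes "psd Z" "i \<notin> S"
  shows "0 \<le> c * c * Z$i$i + 2 * c * (\<Sum>j\<in>S. Z$i$j * x j) + (\<Sum>j\<in>S. \<Sum>k\<in>S. x j * Z$j$k * x k)"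
proof -
  define f where "f = x(i := c)"
  have fi: "f i = c" and fx: "\<And>j. j \<in> S \<Longrightarrow> f j = x j"
    using assms(2) by (auto simp: f_def)
  have "0 \<le> (\<Sum>j\<in>insert i S. \<Sum>k\<in>insert i S. f j * Z$j$k * f k)"
    using psd_imp_psd_on[OF assms(1)] unfolding psd_on_def by blast
  also have "\<dots> = f i * Z$i$i * f i + (\<Sum>k\<in>S. f i * Z$i$k * f k)
      + (\<Sum>j\<in>S. f j * Z$j$i * f i) + (\<Sum>j\<in>S. \<Sum>k\<in>S. f j * Z$j$k * f k)"
    using assms(2) by (simp add: sum.distrib)
  also have "\<dots> = c * c * Z$i$i + c * (\<Sum>k\<in>S. Z$i$k * x k) + c * (\<Sum>j\<in>S. x j * Z$j$i)
      + (\<Sum>j\<in>S. \<Sum>k\<in>S. x j * Z$j$k * x k)"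
    unfolding sum_distrib_left by (simp add: fi fx mult_ac cong: sum.cong)
  also have "(\<Sum>j\<in>S. x j * Z$j$i) = (\<Sum>j\<in>S. Z$i$j * x j)"
    using psd_entry_sym[OF assms(1), of i] by (intro sum.cong) (simp_all add: mult.commute)
  finally show ?thesis by simp
qed

(* Test the quadratic form of Z on the vector l e_i - w, where w is row i of Z restricted to S. *)
lemma psd_row_sqnorm_le:
  fixes Z :: "real^'n::finite^'n"
  assumes Z: "psd Z" and bound: "psd_on S (l *\<^sub>R mat 1 - Z)" and "l > 0" and "i \<notin> S"
  shows "(\<Sum>j\<in>S. (Z$i$j)\<^sup>2) \<le> l * Z$i$i"
proof -
  define w where "w j = Z$i$j" for j
  have "0 \<le> l * l * Z$i$i + 2 * l * (\<Sum>j\<in>S. Z$i$j * - w j) + (\<Sum>j\<in>S. \<Sum>k\<in>S. - w j * Z$j$k * - w k)"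
    using psd_quadratic_sum_insert[OF Z \<open>i \<notin> S\<close>] .
  also have "\<dots> = l * l * Z$i$i - 2 * l * (\<Sum>j\<in>S. (w j)\<^sup>2) + (\<Sum>j\<in>S. \<Sum>k\<in>S. w j * Z$j$k * w k)"
    by (simp add: w_def power2_eq_square sum_negf)
  also have "\<dots> \<le> l * l * Z$i$i - l * (\<Sum>j\<in>S. (w j)\<^sup>2)"
    using psd_on_scaled_id_minus_imp_le[OF bound, of w] by simp
  finally have "l * (\<Sum>j\<in>S. (w j)\<^sup>2) \<le> l * (l * Z$i$i)" by simp
  then show ?thesis using \<open>l > 0\<close> by (simp add: w_def)
qed

lemma sqnorm12_add_scaled_id: "sqnorm12 r (Z + s *\<^sub>R mat 1) = sqnorm12 r Z"
  unfolding sqnorm12_def by (intro sum.cong refl) (auto simp: mat_def)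

lemma sqnorm12_le_trace:
  fixes Z :: "real^('n::{finite,linorder})^('n::{finite,linorder})"
  assumes Z: "psd Z" and bound: "psd_on (- blk1 r) (l *\<^sub>R mat 1 - Z)" and "l > 0"
  shows "sqnorm12 r Z \<le> l * trace Z"
proof -
  have "sqnorm12 r Z \<le> (\<Sum>i\<in>blk1 r. l * Z$i$i)"
    unfolding sqnorm12_def using psd_row_sqnorm_le[OF Z bound \<open>l > 0\<close>] by (intro sum_mono) simp
  also have "\<dots> \<le> (\<Sum>i\<in>UNIV. l * Z$i$i)"
    using psd_diag_nonneg[OF Z] \<open>l > 0\<close> by (intro sum_mono2) auto
  also have "\<dots> = l * trace Z"
    by (simp add: trace_def sum_distrib_left)
  finally show ?thesis .
qed

lemma frob_mat_1_eq_trace: "frob X (mat 1) = trace X"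
  by (simp add: frob_def trace_def mat_def if_distrib cong: if_cong)

lemma trace_Lmap: "trace (Lmap C A m y) = trace C - (\<Sum>i<m. y i * trace (A i))"
  by (simp add: Lmap_def trace_def sum_subtractf sum_distrib_left sum.swap[of _ UNIV])

lemma trace_scaled_id: "trace (c *\<^sub>R mat 1 :: real^'n::finite^'n) = c * real CARD('n)"
  by (simp add: trace_def mat_def)

lemma vval_mono:
  assumes "\<epsilon> \<le> \<epsilon>'"
  shows "vval C A b m \<epsilon> \<eta> \<le> vval C A b m \<epsilon>' \<eta>"
  unfolding vval_def
proof (rule Sup_subset_mono, safe)
  fix y assume feasible: "psd (Lmap C A m y + \<epsilon> *\<^sub>R mat 1)"
  have "psd (Lmap C A m y + \<epsilon> *\<^sub>R mat 1 + (\<epsilon>' - \<epsilon>) *\<^sub>R mat 1)"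
    by (rule psd_add_scaled_id[OF feasible]) (use assms in simp)
  then have "psd (Lmap C A m y + \<epsilon>' *\<^sub>R mat 1)"
    by (simp add: algebra_simps)
  then show "\<exists>y'. ereal (\<Sum>i<m. (b i + \<eta> * frob (A i) (mat 1)) * y i) =
      ereal (\<Sum>i<m. (b i + \<eta> * frob (A i) (mat 1)) * y' i) \<and>
      psd (Lmap C A m y' + \<epsilon>' *\<^sub>R mat 1)" by blast
qed

lemma D_objective_le_RD1_objective:
  fixes C :: "real^('n::{finite,linorder})^('n::{finite,linorder})"
  assumes feasible: "psd (Lmap C A m y + (t * \<alpha>) *\<^sub>R mat 1)"
    and bound: "psd_on (- blk1 r) ((t * \<alpha> * M) *\<^sub>R mat 1 - (Lmap C A m y + (t * \<alpha>) *\<^sub>R mat 1))"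
    and "t > 0" "\<alpha> > 0" "M > 0"
  shows "(\<Sum>i<m. (b i + t * frob (A i) (mat 1)) * y i)
    \<le> bty b m y - sqnorm12 r (Lmap C A m y) / (M * \<alpha>)
       + (t\<^sup>2 * \<alpha> * real CARD('n) + t * frob C (mat 1))"
proof -
  let ?L = "Lmap C A m y"
  have "sqnorm12 r ?L \<le> t * \<alpha> * M * trace (?L + (t * \<alpha>) *\<^sub>R mat 1)"
    using sqnorm12_le_trace[OF feasible bound] sqnorm12_add_scaled_id[of r ?L] assms(3-5) by simp
  also have "\<dots> = (t * (trace C - (\<Sum>i<m. y i * trace (A i))) + t\<^sup>2 * \<alpha> * real CARD('n)) * (M * \<alpha>)"
    by (simp add: trace_add trace_Lmap trace_scaled_id algebra_simps power2_eq_square)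
  finally have "sqnorm12 r ?L / (M * \<alpha>) \<le> t * (trace C - (\<Sum>i<m. y i * trace (A i))) + t\<^sup>2 * \<alpha> * real CARD('n)"
    using assms(4,5) by (simp add: pos_divide_le_eq)
  then show ?thesis
    by (simp add: bty_def frob_mat_1_eq_trace algebra_simps sum.distrib sum_distrib_left)
qed

theorem lemma3:
  fixes C :: "real^('n::{finite,linorder})^('n::{finite,linorder})" and A :: "nat \<Rightarrow> real^('n::{finite,linorder})^('n::{finite,linorder})"
    and b :: "nat \<Rightarrow> real" and m r :: nat and M :: real
  assumes symC: "symm C" and symA: "\<forall>i<m. symm (A i)"
    and Pfeas: "P_feasible C A b m" and Dfeas: "D_feasible C A m"
    and sd1: "sing_deg_one C A m"
    and r_lt: "r < CARD('n)"
    and a: "\<forall>y. psd (Lmap C A m y) \<longleftrightarrow>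
             ((\<forall>i\<in>blk1 r. \<forall>j\<in>- blk1 r. Lmap C A m y $ i $ j = 0) \<and>
              (\<forall>i\<in>- blk1 r. \<forall>j\<in>- blk1 r. Lmap C A m y $ i $ j = 0) \<and>
              psd_on (blk1 r) (Lmap C A m y))"
    and b_cond: "\<exists>y. (\<forall>i\<in>blk1 r. \<forall>j\<in>- blk1 r. Lmap C A m y $ i $ j = 0) \<and>
              (\<forall>i\<in>- blk1 r. \<forall>j\<in>- blk1 r. Lmap C A m y $ i $ j = 0) \<and>
              pd_on (blk1 r) (Lmap C A m y)"
    and c_cond: "\<exists>X. symm X \<and> (\<forall>i j. (i \<in> blk1 r \<or> j \<in> blk1 r) \<longrightarrow> X $ i $ j = 0) \<and>
              pd_on (- blk1 r) X \<and> frob C X = 0 \<and> (\<forall>i<m. frob (A i) X = 0)"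
    and Mpos: "M > 0"
    and Mbound: "\<forall>t\<ge>0. \<forall>y. psd_on (- blk1 r) (Lmap C A m y + t *\<^sub>R mat 1) \<longrightarrow>
              psd_on (- blk1 r) ((t * M) *\<^sub>R mat 1 - (Lmap C A m y + t *\<^sub>R mat 1))"
  shows "\<forall>t>0. \<forall>\<alpha>>0.
           vval C A b m 0 t \<le> vval C A b m (t * \<alpha>) t \<and>
           vval C A b m (t * \<alpha>) t \<le>
             u1 C A b m r M \<alpha> t + ereal (t\<^sup>2 * \<alpha> * real CARD('n) + t * frob C (mat 1))"
proof (intro allI impI conjI)
  fix t \<alpha> :: real
  assume "t > 0" "\<alpha> > 0"
  then show "vval C A b m 0 t \<le> vval C A b m (t * \<alpha>) t"
    by (intro vval_mono) simp
  let ?K = "t\<^sup>2 * \<alpha> * real CARD('n) + t * frob C (mat 1)"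
  show "vval C A b m (t * \<alpha>) t \<le> u1 C A b m r M \<alpha> t + ereal ?K"
    unfolding vval_def
  proof (rule Sup_least, safe)
    fix y assume feasible: "psd (Lmap C A m y + (t * \<alpha>) *\<^sub>R mat 1)"
    have "psd_on (- blk1 r) ((t * \<alpha> * M) *\<^sub>R mat 1 - (Lmap C A m y + (t * \<alpha>) *\<^sub>R mat 1))"
      using Mbound psd_imp_psd_on[OF feasible] \<open>t > 0\<close> \<open>\<alpha> > 0\<close> by simp
    then have "ereal (\<Sum>i<m. (b i + t * frob (A i) (mat 1)) * y i)
        \<le> ereal (bty b m y - sqnorm12 r (Lmap C A m y) / (M * \<alpha>)) + ereal ?K"
      using D_objective_le_RD1_objective[OF feasible] \<open>t > 0\<close> \<open>\<alpha> > 0\<close> Mpos by simp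
    also have "\<dots> \<le> u1 C A b m r M \<alpha> t + ereal ?K"
      unfolding u1_def by (intro add_right_mono Sup_upper) (use feasible in blast)
    finally show "ereal (\<Sum>i<m. (b i + t * frob (A i) (mat 1)) * y i) \<le> u1 C A b m r M \<alpha> t + ereal ?K" .
  qed
qed

end
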